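(* Let $\vartheta(z,\tau)=\sum_{m\in\mathbf{Z}}e^{\pi i m^2\tau+2\pi i mz}$ for $z\in\mathbf{C}$, $\operatorname{Im}\tau>0$, and for $t>0$ let $c(t)=\min_{x\in\mathbf{R}}\vartheta(x,it)$ and $C(t)=\vartheta(0,it)$. Then (i) for every $t>0$, $c(t)=\vartheta(\tfrac12,it)$; (ii) for every $t>0.527$, $\dfrac{C(t)\,(C(t)-1)}{c(t)}<1$. *)

theory Defs
  imports "HOL-Analysis.Analysis"
begin

text \<open>Jacobi theta function: sum over all integers m of exp(pi i m^2 tau + 2 pi i m z).
  For Im tau > 0 the series converges absolutely, so the unordered sum is the usual one.\<close>
definition theta :: "complex \<Rightarrow> complex \<Rightarrow> complex" where
  "theta z \<tau> = (\<Sum>\<^sub>\<infinity>m::int. exp (pi * \<i> * of_int m ^ 2 * \<tau> + 2 * pi * \<i> * of_int m * z))"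

text \<open>c(t) = min over real x of theta(x, i t) (theta(x,it) is real for real x, t > 0).\<close>
definition theta_min :: "real \<Rightarrow> real" where
  "theta_min t = (INF x::real. Re (theta (of_real x) (\<i> * of_real t)))"

definition theta_C :: "real \<Rightarrow> real" where
  "theta_C t = Re (theta 0 (\<i> * of_real t))"

end

theory Submission
  imports Defs
begin

text \<open>Write q = exp(-pi t), so that theta(x, i t) = sum_k q^(k^2) cos(2 pi k x). By the truncated
  Jacobi triple product,
    prod_(j=1..n) (1 + 2 q^(2j-1) cos y + q^(4j-2)) = sum_(|k| <= n) [2n, n+k]_(q^2) q^(k^2) cos(k y),
  and every factor on the left is smallest at y = pi. Dividing by the central Gaussian binomial
  [2n, n]_(q^2) turns the coefficients into q^(k^2) times ratios in [0, 1] that tend to 1, so by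
  dominated convergence the theta series is smallest at x = 1/2 as well.

  For the second part, theta(0, i t) + theta(1/2, i t) = 2 sum_(k even) q^(k^2) >= 2, i.e. c >= 2 - C,
  while C <= 1 + 2q/(1 - q^3) < sqrt 2 as soon as q < 1/5, which holds for t > 0.527.
  Hence C (C - 1) < 2 - C <= c.\<close>

section \<open>q-Pochhammer symbols and Gaussian binomial coefficients\<close>

definition qpoch :: "real \<Rightarrow> nat \<Rightarrow> real" where
  "qpoch p a = (\<Prod>i=1..a. 1 - p ^ i)"

text \<open>The reciprocal 1/(p;p)_k, extended by 0 to negative k, so that \<open>qbinom p n k\<close> vanishes
  for k outside 0..n without any case distinction.\<close>
definition inv_qpoch :: "real \<Rightarrow> int \<Rightarrow> real" where
  "inv_qpoch p k = (if k < 0 then 0 else 1 / qpoch p (nat k))"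

definition qbinom :: "real \<Rightarrow> nat \<Rightarrow> int \<Rightarrow> real" where
  "qbinom p n k = qpoch p n * inv_qpoch p k * inv_qpoch p (int n - k)"

lemma qpoch_pos: "0 \<le> p \<Longrightarrow> p < 1 \<Longrightarrow> 0 < qpoch p a"
  unfolding qpoch_def by (intro prod_pos) (auto simp: power_less_one_iff)

lemma qpoch_Suc: "qpoch p (Suc a) = qpoch p a * (1 - p ^ Suc a)"
  unfolding qpoch_def by (simp add: prod.cl_ivl_Suc)

lemma qpoch_add: "qpoch p (a + m) = qpoch p a * (\<Prod>i=1..m. 1 - p ^ (a + i))"
  by (induction m) (simp_all add: qpoch_Suc prod.cl_ivl_Suc)

lemma inv_qpoch_nonneg: "0 \<le> p \<Longrightarrow> p < 1 \<Longrightarrow> 0 \<le> inv_qpoch p k"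
  unfolding inv_qpoch_def using qpoch_pos[of p] by (simp add: less_imp_le)

lemma inv_qpoch_succ:
  assumes "0 \<le> p" "p < 1"
  shows "inv_qpoch p k = (1 - p powi (k + 1)) * inv_qpoch p (k + 1)"
proof (cases "k < 0")
  case True
  then show ?thesis by (cases "k = -1") (auto simp: inv_qpoch_def)
next
  case False
  then have k: "nat (k + 1) = Suc (nat k)"
    by simp
  with False have pk: "p powi (k + 1) = p ^ Suc (nat k)"
    by (metis add_nonneg_nonneg linorder_not_le power_int_nonneg_exp zero_le_one)
  have "p ^ Suc (nat k) < 1"
    using assms by (intro power_less_one_iff[THEN iffD2]) auto
  then show ?thesis
    using False qpoch_pos[OF assms, of "nat k"] by (simp add: inv_qpoch_def k pk qpoch_Suc)
qed

lemma qbinom_nat: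
  assumes "k \<le> n"
  shows "qbinom p n (int k) = qpoch p n / (qpoch p k * qpoch p (n - k))"
proof -
  have "\<not> int n - int k < 0" "nat (int n - int k) = n - k"
    using assms by auto
  then show ?thesis
    by (simp add: qbinom_def inv_qpoch_def)
qed

lemma qbinom_eq_0: "k < 0 \<or> int n < k \<Longrightarrow> qbinom p n k = 0"
  by (auto simp: qbinom_def inv_qpoch_def)

lemma qbinom_symmetric: "qbinom p n (int n - k) = qbinom p n k"
  by (simp add: qbinom_def)

lemma qbinom_nonneg: "0 \<le> p \<Longrightarrow> p < 1 \<Longrightarrow> 0 \<le> qbinom p n k"
  unfolding qbinom_def using qpoch_pos[of p] inv_qpoch_nonneg[of p] by (simp add: less_imp_le)

lemma qbinom_pos: "0 \<le> p \<Longrightarrow> p < 1 \<Longrightarrow> k \<le> n \<Longrightarrow> 0 < qbinom p n (int k)"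
  using qpoch_pos[of p] by (simp add: qbinom_nat)

section \<open>The finite Jacobi triple product\<close>

text \<open>The coefficient of z^k in prod_(j=1..n) (1 + z q^(2j-1)) (1 + q^(2j-1)/z).\<close>
definition jtp_coeff :: "real \<Rightarrow> nat \<Rightarrow> int \<Rightarrow> real" where
  "jtp_coeff q n k = q powi (k * k) * qbinom (q\<^sup>2) (2 * n) (int n + k)"

lemma jtp_coeff_eq_0: "int n < \<bar>k\<bar> \<Longrightarrow> jtp_coeff q n k = 0"
  unfolding jtp_coeff_def by (subst qbinom_eq_0) auto

lemma jtp_coeff_conv_inv_qpoch:
  "jtp_coeff q n k =
     q powi (k * k) * qpoch (q\<^sup>2) (2 * n) * inv_qpoch (q\<^sup>2) (int n + k) * inv_qpoch (q\<^sup>2) (int n - k)"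
proof -
  have "int (2 * n) - (int n + k) = int n - k"
    by simp
  then show ?thesis
    by (simp add: jtp_coeff_def qbinom_def)
qed

lemma inv_qpoch_square_succ:
  fixes q :: real
  assumes "0 < q" "q < 1"
  shows "inv_qpoch (q\<^sup>2) m = (1 - (q powi (m + 1))\<^sup>2) * inv_qpoch (q\<^sup>2) (m + 1)"
proof -
  have "0 \<le> q\<^sup>2" "q\<^sup>2 < 1"
    using assms by (simp_all add: power_less_one_iff)
  then have "inv_qpoch (q\<^sup>2) m = (1 - (q\<^sup>2) powi (m + 1)) * inv_qpoch (q\<^sup>2) (m + 1)"
    by (rule inv_qpoch_succ)
  then show ?thesis
    by (simp add: power2_eq_square power_int_mult_distrib)
qed

lemma power_int_square_add_1:
  fixes x :: "'a :: field"
  assumes "x \<noteq> 0"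
  shows "x powi ((k + 1) * (k + 1)) = x powi (k * k) * x * (x powi k)\<^sup>2"
proof -
  have "(k + 1) * (k + 1) = k * k + k + k + 1"
    by algebra
  then have "x powi ((k + 1) * (k + 1)) = x powi (k * k) * x powi k * x powi k * x powi 1"
    by (simp only: power_int_add[OF disjI1[OF assms]])
  then show ?thesis
    by (simp add: power2_eq_square mult_ac)
qed

lemma power_int_square_diff_1:
  fixes x :: "'a :: field"
  assumes "x \<noteq> 0"
  shows "x powi ((k - 1) * (k - 1)) = x powi (k * k) * x / (x powi k)\<^sup>2"
proof -
  have "(k - 1) * (k - 1) = k * k + 1 - k - k"
    by algebra
  then have "x powi ((k - 1) * (k - 1)) = x powi (k * k) * x powi 1 / x powi k / x powi k"
    by (simp only: power_int_add[OF disjI1[OF assms]] power_int_diff[OF disjI1[OF assms]])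
  then show ?thesis
    by (simp add: power2_eq_square)
qed

lemma qpoch_square_double_Suc:
  "qpoch (q\<^sup>2) (2 * Suc n) = qpoch (q\<^sup>2) (2 * n) * (1 - q^(4*n+2)) * (1 - q^(4*n+4))"
proof -
  have "2 * Suc n = Suc (Suc (2 * n))" "2 * Suc (2 * n) = 4 * n + 2" "2 * Suc (Suc (2 * n)) = 4 * n + 4"
    by simp_all
  then show ?thesis
    by (simp only: qpoch_Suc power_mult[symmetric])
qed

text \<open>Multiplication by the next factor (1 + z q^(2n+1)) (1 + q^(2n+1)/z) = 1 + q^(4n+2) + q^(2n+1) (z + 1/z).\<close>
lemma jtp_coeff_Suc:
  assumes "0 < q" "q < 1"
  shows "jtp_coeff q (Suc n) k =
    (1 + q^(4*n+2)) * jtp_coeff q n k + q^(2*n+1) * (jtp_coeff q n (k - 1) + jtp_coeff q n (k + 1))"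
proof -
  define N where "N = int n"
  define a where "a = q ^ n"
  define u where "u = q powi k"
  define E where "E = q powi (k * k)"
  define X where "X = qpoch (q\<^sup>2) (2 * n)"
  define A where "A = inv_qpoch (q\<^sup>2) (N + k + 1)"
  define B where "B = inv_qpoch (q\<^sup>2) (N - k + 1)"
  have q0: "q \<noteq> 0" and u0: "u \<noteq> 0"
    using assms by (auto simp: u_def)
  have pows: "q powi (N + k + 1) = a * u * q" "q powi (N - k + 1) = a * q / u"
      "q powi (N + k) = a * u" "q powi (N - k) = a / u"
    using q0 by (simp_all add: power_int_add power_int_diff N_def a_def u_def)
  have i1: "inv_qpoch (q\<^sup>2) (N + k) = (1 - (a * u * q)\<^sup>2) * A"
    using inv_qpoch_square_succ[OF assms, of "N + k"] by (simp add: pows A_def)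
  have i2: "inv_qpoch (q\<^sup>2) (N - k) = (1 - (a * q / u)\<^sup>2) * B"
    using inv_qpoch_square_succ[OF assms, of "N - k"] by (simp add: pows B_def)
  have i3: "inv_qpoch (q\<^sup>2) (N + k - 1) = (1 - (a * u)\<^sup>2) * (1 - (a * u * q)\<^sup>2) * A"
    using inv_qpoch_square_succ[OF assms, of "N + k - 1"] by (simp add: pows i1)
  have i4: "inv_qpoch (q\<^sup>2) (N - k - 1) = (1 - (a / u)\<^sup>2) * (1 - (a * q / u)\<^sup>2) * B"
    using inv_qpoch_square_succ[OF assms, of "N - k - 1"] by (simp add: pows i2)
  have pw: "q^(4*n+2) = a^4 * q^2" "q^(4*n+4) = a^4 * q^4" "q^(2*n+1) = a^2 * q"
    unfolding a_def power_mult[symmetric] power_add by (simp_all add: mult.commute)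
  have e1: "int (Suc n) + k = N + k + 1" "int (Suc n) - k = N - k + 1"
    by (simp_all add: N_def)
  have c0: "jtp_coeff q (Suc n) k = E * (X * (1 - a^4 * q^2) * (1 - a^4 * q^4)) * A * B"
    unfolding jtp_coeff_conv_inv_qpoch qpoch_square_double_Suc pw e1 E_def A_def B_def X_def
    by (simp only: mult_ac)
  have c1: "jtp_coeff q n k = E * X * ((1 - (a * u * q)\<^sup>2) * A) * ((1 - (a * q / u)\<^sup>2) * B)"
    unfolding jtp_coeff_conv_inv_qpoch N_def[symmetric] i1 i2 by (simp add: E_def X_def)
  have e2: "N + (k - 1) = N + k - 1" "N - (k - 1) = N - k + 1"
    by simp_all
  have c2: "jtp_coeff q n (k - 1) = E * q / u^2 * X * ((1 - (a * u)\<^sup>2) * (1 - (a * u * q)\<^sup>2) * A) * B"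
    unfolding jtp_coeff_conv_inv_qpoch N_def[symmetric] e2 i3 power_int_square_diff_1[OF q0]
    by (simp add: E_def u_def X_def B_def)
  have e3: "N + (k + 1) = N + k + 1" "N - (k + 1) = N - k - 1"
    by simp_all
  have c3: "jtp_coeff q n (k + 1) = E * q * u^2 * X * A * ((1 - (a / u)\<^sup>2) * (1 - (a * q / u)\<^sup>2) * B)"
    unfolding jtp_coeff_conv_inv_qpoch N_def[symmetric] e3 i4 power_int_square_add_1[OF q0]
    by (simp add: E_def u_def X_def A_def)
  show ?thesis
    unfolding c0 c1 c2 c3 pw using u0 by (simp add: field_simps) algebra
qed

lemma sum_jtp_coeff_shift:
  assumes "\<bar>d\<bar> \<le> 1"
  shows "(\<Sum>k=-int (Suc n)..int (Suc n). jtp_coeff q n (k + d) * g k) =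
         (\<Sum>k=-int n..int n. jtp_coeff q n k * g (k - d))"
proof -
  have "(\<Sum>k=-int (Suc n)..int (Suc n). jtp_coeff q n (k + d) * g k) =
        (\<Sum>k=-int (Suc n) + d..int (Suc n) + d. jtp_coeff q n k * g (k - d))"
    by (rule sum.reindex_bij_witness[of _ "\<lambda>k. k - d" "\<lambda>k. k + d"]) auto
  also have "\<dots> = (\<Sum>k=-int n..int n. jtp_coeff q n k * g (k - d))"
    using assms by (intro sum.mono_neutral_right) (auto simp: jtp_coeff_eq_0)
  finally show ?thesis .
qed

lemma finite_jacobi_triple_product_cos:
  assumes "0 < q" "q < 1"
  shows "(\<Sum>k=-int n..int n. jtp_coeff q n k * cos (of_int k * y)) =
         (\<Prod>j=1..n. 1 + 2 * q^(2*j-1) * cos y + q^(4*j-2))"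
proof (induction n)
  case 0
  then show ?case
    by (simp add: jtp_coeff_def qbinom_def inv_qpoch_def qpoch_def)
next
  case (Suc n)
  define S where "S = (\<Sum>k=-int n..int n. jtp_coeff q n k * cos (of_int k * y))"
  let ?I = "{-int (Suc n)..int (Suc n)}"
  have s0: "(\<Sum>k\<in>?I. jtp_coeff q n k * cos (of_int k * y)) = S"
    using sum_jtp_coeff_shift[where d = 0 and n = n and q = q and g = "\<lambda>k. cos (of_int k * y)"]
    by (simp add: S_def)
  have s1: "(\<Sum>k\<in>?I. jtp_coeff q n (k - 1) * cos (of_int k * y)) =
      (\<Sum>k=-int n..int n. jtp_coeff q n k * cos (of_int (k + 1) * y))"
    using sum_jtp_coeff_shift[where d = "-1" and n = n and q = q and g = "\<lambda>k. cos (of_int k * y)"]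
    by simp
  have s2: "(\<Sum>k\<in>?I. jtp_coeff q n (k + 1) * cos (of_int k * y)) =
      (\<Sum>k=-int n..int n. jtp_coeff q n k * cos (of_int (k - 1) * y))"
    using sum_jtp_coeff_shift[where d = 1 and n = n and q = q and g = "\<lambda>k. cos (of_int k * y)"]
    by simp
  have cos_sum: "cos (of_int (k + 1) * y) + cos (of_int (k - 1) * y) = 2 * cos y * cos (of_int k * y)" for k
    by (simp add: distrib_right left_diff_distrib cos_add cos_diff)
  have "(\<Sum>k\<in>?I. jtp_coeff q (Suc n) k * cos (of_int k * y)) =
      (1 + q^(4*n+2)) * (\<Sum>k\<in>?I. jtp_coeff q n k * cos (of_int k * y)) +
      q^(2*n+1) * ((\<Sum>k\<in>?I. jtp_coeff q n (k - 1) * cos (of_int k * y)) +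
                   (\<Sum>k\<in>?I. jtp_coeff q n (k + 1) * cos (of_int k * y)))"
    unfolding jtp_coeff_Suc[OF assms] sum_distrib_left sum.distrib[symmetric]
    by (rule sum.cong) (simp_all add: algebra_simps)
  also have "\<dots> = (1 + q^(4*n+2)) * S + q^(2*n+1) *
      (\<Sum>k=-int n..int n. jtp_coeff q n k * (cos (of_int (k + 1) * y) + cos (of_int (k - 1) * y)))"
    unfolding s0 s1 s2 by (simp add: sum.distrib[symmetric] distrib_left)
  also have "(\<Sum>k=-int n..int n. jtp_coeff q n k * (cos (of_int (k + 1) * y) + cos (of_int (k - 1) * y))) =
      2 * cos y * S"
    unfolding cos_sum S_def sum_distrib_left by (rule sum.cong) simp_all
  also have "(1 + q^(4*n+2)) * S + q^(2*n+1) * (2 * cos y * S) = (1 + 2 * q^(2*n+1) * cos y + q^(4*n+2)) * S"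
    by (simp add: algebra_simps)
  finally show ?case
    using Suc.IH by (simp add: S_def prod.cl_ivl_Suc mult.commute)
qed

definition qbinom_central_ratio :: "real \<Rightarrow> nat \<Rightarrow> int \<Rightarrow> real" where
  "qbinom_central_ratio p n k = qbinom p (2 * n) (int n + k) / qbinom p (2 * n) (int n)"

lemma jtp_coeff_eq_central_ratio:
  assumes "0 < q" "q < 1"
  shows "jtp_coeff q n k = qbinom (q\<^sup>2) (2 * n) (int n) * (q powi (k * k) * qbinom_central_ratio (q\<^sup>2) n k)"
proof -
  have "0 < qbinom (q\<^sup>2) (2 * n) (int n)"
    using assms by (intro qbinom_pos) (auto simp: power_less_one_iff)
  then show ?thesis
    by (simp add: jtp_coeff_def qbinom_central_ratio_def)
qed

lemma qbinom_central_ratio_uminus: "qbinom_central_ratio p n (- k) = qbinom_central_ratio p n k"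
  using qbinom_symmetric[of p "2 * n" "int n + k"]
  by (simp add: qbinom_central_ratio_def algebra_simps)

lemma qbinom_central_ratio_abs: "qbinom_central_ratio p n k = qbinom_central_ratio p n (int (nat \<bar>k\<bar>))"
  by (cases "k \<ge> 0") (simp_all add: qbinom_central_ratio_uminus [of p n k, symmetric])

lemma qbinom_central_ratio_nonneg: "0 \<le> p \<Longrightarrow> p < 1 \<Longrightarrow> 0 \<le> qbinom_central_ratio p n k"
  unfolding qbinom_central_ratio_def by (simp add: qbinom_nonneg)

lemma qbinom_central_ratio_eq_0: "int n < \<bar>k\<bar> \<Longrightarrow> qbinom_central_ratio p n k = 0"
  unfolding qbinom_central_ratio_def by (subst qbinom_eq_0) auto

lemma qbinom_central_ratio_eq_prod:
  assumes "0 \<le> p" "p < 1" "m \<le> n"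
  shows "qbinom_central_ratio p n (int m) = (\<Prod>i=1..m. 1 - p^(n - m + i)) / (\<Prod>i=1..m. 1 - p^(n + i))"
proof -
  define R1 where "R1 = (\<Prod>i=1..m. 1 - p^(n - m + i))"
  define R2 where "R2 = (\<Prod>i=1..m. 1 - p^(n + i))"
  have R1: "qpoch p n = qpoch p (n - m) * R1"
    using qpoch_add[of p "n - m" m] assms(3) by (simp add: R1_def)
  have R2: "qpoch p (n + m) = qpoch p n * R2"
    using qpoch_add[of p n m] by (simp add: R2_def)
  have pos: "0 < qpoch p (n - m)" "0 < qpoch p n" "0 < qpoch p (n + m)"
    using qpoch_pos assms(1,2) by blast+
  have "int n + int m = int (n + m)" "2 * n - (n + m) = n - m" "2 * n - n = n"
    using assms(3) by simp_all
  then have "qbinom_central_ratio p n (int m) = qpoch p n * qpoch p n / (qpoch p (n + m) * qpoch p (n - m))"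
    using assms(3) pos qpoch_pos[OF assms(1,2), of "2 * n"]
    unfolding qbinom_central_ratio_def by (simp only: qbinom_nat) (simp add: field_simps)
  also have "\<dots> = R1 / R2"
    using pos unfolding R1 R2 by (simp add: field_simps)
  finally show ?thesis
    by (simp add: R1_def R2_def)
qed

lemma qbinom_central_ratio_le_1:
  assumes "0 \<le> p" "p < 1"
  shows "qbinom_central_ratio p n k \<le> 1"
proof (cases "\<bar>k\<bar> \<le> int n")
  case False
  then show ?thesis by (simp add: qbinom_central_ratio_eq_0)
next
  case True
  define m where "m = nat \<bar>k\<bar>"
  have "m \<le> n" using True by (simp add: m_def)
  have "(\<Prod>i=1..m. 1 - p^(n - m + i)) \<le> (\<Prod>i=1..m. 1 - p^(n + i))"
  proof (rule prod_mono)
    fix i assume "i \<in> {1..m}"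
    then have "p^(n - m + i) < 1" "p^(n + i) \<le> p^(n - m + i)"
      using assms by (auto simp: power_less_one_iff intro!: power_decreasing)
    then show "0 \<le> 1 - p^(n - m + i) \<and> 1 - p^(n - m + i) \<le> 1 - p^(n + i)"
      by simp
  qed
  moreover have "0 < (\<Prod>i=1..m. 1 - p^(n + i))"
    using assms by (intro prod_pos) (auto simp: power_less_one_iff)
  moreover have "qbinom_central_ratio p n k = (\<Prod>i=1..m. 1 - p^(n - m + i)) / (\<Prod>i=1..m. 1 - p^(n + i))"
    unfolding qbinom_central_ratio_abs[of p n k] m_def[symmetric]
    by (rule qbinom_central_ratio_eq_prod[OF assms \<open>m \<le> n\<close>])
  ultimately show ?thesis
    by (simp add: divide_le_eq_1)
qed

lemma qbinom_central_ratio_tendsto_1: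
  assumes "0 \<le> p" "p < 1"
  shows "(\<lambda>n. qbinom_central_ratio p n k) \<longlonglongrightarrow> 1"
proof -
  define m where "m = nat \<bar>k\<bar>"
  have power_tendsto_0: "(\<lambda>n. p^(n + j)) \<longlonglongrightarrow> 0" for j
    using assms by (simp add: power_add) (intro tendsto_mult_left_zero LIMSEQ_power_zero, simp)
  have shifted_power_tendsto_0: "(\<lambda>n. p^(n - m + i)) \<longlonglongrightarrow> 0" for i
    by (rule LIMSEQ_offset[where k = m]) (simp add: power_tendsto_0)
  have "(\<lambda>n. (\<Prod>i=1..m. 1 - p^(n - m + i)) / (\<Prod>i=1..m. 1 - p^(n + i)))
      \<longlonglongrightarrow> (\<Prod>i=1..m. 1 - 0) / (\<Prod>i=1..m. 1 - 0)"
    by (intro tendsto_divide tendsto_prod tendsto_diff tendsto_const shifted_power_tendsto_0 power_tendsto_0)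
      simp
  moreover have "\<forall>\<^sub>F n in sequentially.
      (\<Prod>i=1..m. 1 - p^(n - m + i)) / (\<Prod>i=1..m. 1 - p^(n + i)) = qbinom_central_ratio p n k"
  proof (rule eventually_sequentiallyI[of m])
    fix n assume "m \<le> n"
    then show "(\<Prod>i=1..m. 1 - p^(n - m + i)) / (\<Prod>i=1..m. 1 - p^(n + i)) = qbinom_central_ratio p n k"
      unfolding qbinom_central_ratio_abs[of p n k] m_def[symmetric]
      by (simp add: qbinom_central_ratio_eq_prod[OF assms])
  qed
  ultimately show ?thesis
    by (simp add: Lim_transform_eventually)
qed

lemma prod_jtp_factors_min_at_pi:
  assumes "0 \<le> q"
  shows "(\<Prod>j=1..n. 1 + 2 * q^(2*j-1) * cos pi + q^(4*j-2)) \<le> (\<Prod>j=1..n. 1 + 2 * q^(2*j-1) * cos y + q^(4*j-2))"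
proof (rule prod_mono)
  fix j assume "j \<in> {1..n}"
  define a where "a = q^(2*j-1)"
  have "4 * j - 2 = (2 * j - 1) * 2"
    using \<open>j \<in> {1..n}\<close> by simp
  then have sq: "q^(4*j-2) = a\<^sup>2"
    unfolding a_def by (simp only: power_mult)
  have "0 \<le> a"
    using assms by (simp add: a_def)
  then have "2 * a * cos pi \<le> 2 * a * cos y"
    using cos_ge_minus_one[of y] by (intro mult_left_mono) simp_all
  moreover have "1 + 2 * a * cos pi + a\<^sup>2 = (1 - a)\<^sup>2"
    by (simp add: power2_eq_square algebra_simps)
  ultimately show "0 \<le> 1 + 2 * q^(2*j-1) * cos pi + q^(4*j-2) \<and>
      1 + 2 * q^(2*j-1) * cos pi + q^(4*j-2) \<le> 1 + 2 * q^(2*j-1) * cos y + q^(4*j-2)"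
    unfolding sq a_def[symmetric] by simp
qed

lemma central_ratio_cos_sum_min_at_pi:
  assumes "0 < q" "q < 1"
  shows "(\<Sum>k=-int n..int n. q powi (k * k) * qbinom_central_ratio (q\<^sup>2) n k * cos (of_int k * pi)) \<le>
         (\<Sum>k=-int n..int n. q powi (k * k) * qbinom_central_ratio (q\<^sup>2) n k * cos (of_int k * y))"
proof -
  define K where "K = qbinom (q\<^sup>2) (2 * n) (int n)"
  have "0 < K"
    using assms by (auto simp: K_def power_less_one_iff intro: qbinom_pos)
  have K_times: "K * (\<Sum>k=-int n..int n. q powi (k * k) * qbinom_central_ratio (q\<^sup>2) n k * cos (of_int k * z)) =
        (\<Prod>j=1..n. 1 + 2 * q^(2*j-1) * cos z + q^(4*j-2))" for z
    unfolding finite_jacobi_triple_product_cos[OF assms, symmetric] jtp_coeff_eq_central_ratio[OF assms]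
    by (simp add: K_def sum_distrib_left mult.assoc)
  have "K * (\<Sum>k=-int n..int n. q powi (k * k) * qbinom_central_ratio (q\<^sup>2) n k * cos (of_int k * pi)) \<le>
        K * (\<Sum>k=-int n..int n. q powi (k * k) * qbinom_central_ratio (q\<^sup>2) n k * cos (of_int k * y))"
    unfolding K_times using assms(1) by (rule prod_jtp_factors_min_at_pi[OF less_imp_le])
  then show ?thesis
    using \<open>0 < K\<close> by simp
qed

section \<open>Theta-type series over the integers\<close>

lemma has_sum_even_int:
  fixes f :: "int \<Rightarrow> real"
  assumes even: "\<And>k. f (- k) = f k" and nonneg: "\<And>k. 0 \<le> f k" and "summable (\<lambda>n. f (int n))"
  shows "(f has_sum (2 * (\<Sum>n. f (int n)) - f 0)) UNIV"
proof -
  define s where "s = (\<Sum>n. f (int n))"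
  have "(\<lambda>n. f (int n)) sums s"
    using assms(3) by (simp add: s_def summable_sums)
  then have "(\<lambda>n. f (int (Suc n))) sums (s - f 0)"
    by (subst sums_Suc_iff) simp
  then have "((\<lambda>n. f (int (Suc n))) has_sum (s - f 0)) UNIV"
    using nonneg by (rule sums_nonneg_imp_has_sum)
  then have "((\<lambda>n. f (- int (Suc n))) has_sum (s - f 0)) UNIV"
    by (simp only: even)
  then have neg: "(f has_sum (s - f 0)) (range (\<lambda>n. - int (Suc n)))"
    by (subst has_sum_reindex) (auto simp: inj_def o_def)
  have "((\<lambda>n. f (int n)) has_sum s) UNIV"
    using \<open>(\<lambda>n. f (int n)) sums s\<close> nonneg by (rule sums_nonneg_imp_has_sum)
  then have nonneg_part: "(f has_sum s) (range int)"
    by (subst has_sum_reindex) (auto simp: o_def)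
  have "range int \<union> range (\<lambda>n. - int (Suc n)) = UNIV"
  proof -
    have "k \<in> range int \<union> range (\<lambda>n. - int (Suc n))" for k :: int
    proof (cases "0 \<le> k")
      case True
      then show ?thesis by (auto intro!: image_eqI[of _ _ "nat k"])
    next
      case False
      then have "k = - int (Suc (nat (- k - 1)))" by simp
      then show ?thesis by blast
    qed
    then show ?thesis by blast
  qed
  moreover have "(f has_sum (s + (s - f 0))) (range int \<union> range (\<lambda>n. - int (Suc n)))"
    by (rule has_sum_Un_disjoint[OF nonneg_part neg]) auto
  ultimately show ?thesis
    by (simp add: s_def algebra_simps)
qed

lemma powi_square_of_nat: "q powi (int n * int n) = q ^ (n * n)"
  by (metis of_nat_mult power_int_of_nat)

lemma summable_power_square:
  fixes q :: real
  assumes "0 \<le> q" "q < 1"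
  shows "summable (\<lambda>n. q ^ (n * n))"
proof (rule summable_comparison_test'[where N = 0])
  show "summable (\<lambda>n. q ^ n)"
    using assms by simp
  show "norm (q ^ (n * n)) \<le> q ^ n" for n
  proof -
    have "n \<le> n * n"
      by (cases n) simp_all
    then show ?thesis
      using assms by (simp add: power_decreasing)
  qed
qed

lemma suminf_power_square_bounds:
  fixes q :: real
  assumes "0 \<le> q" "q < 1"
  shows "1 \<le> (\<Sum>n. q ^ (n * n))" and "(\<Sum>n. q ^ (n * n)) \<le> 1 + q / (1 - q ^ 3)"
proof -
  have q3: "norm (q ^ 3) < 1"
    using assms by (simp add: power_less_one_iff)
  have summable: "summable (\<lambda>n. q ^ (n * n))"
    by (rule summable_power_square[OF assms])
  then have summable_tail: "summable (\<lambda>n. q ^ (Suc n * Suc n))"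
    by (subst summable_Suc_iff)
  have split: "(\<Sum>n. q ^ (n * n)) = 1 + (\<Sum>n. q ^ (Suc n * Suc n))"
    using suminf_split_head[OF summable] by simp
  have "0 \<le> (\<Sum>n. q ^ (Suc n * Suc n))"
    using summable_tail assms(1) by (intro suminf_nonneg) simp_all
  then show "1 \<le> (\<Sum>n. q ^ (n * n))"
    by (simp add: split)
  have tail: "q ^ (Suc n * Suc n) \<le> q * (q ^ 3) ^ n" for n
  proof -
    have "q ^ (Suc n * Suc n) \<le> q ^ Suc (3 * n)"
      using assms by (intro power_decreasing) simp_all
    then show ?thesis
      by (simp add: power_mult)
  qed
  have "(\<Sum>n. q ^ (Suc n * Suc n)) \<le> (\<Sum>n. q * (q ^ 3) ^ n)"
    using summable_tail q3 by (intro suminf_le tail) simp_all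
  also have "\<dots> = q / (1 - q ^ 3)"
    using q3 by (simp add: suminf_mult suminf_geometric)
  finally show "(\<Sum>n. q ^ (n * n)) \<le> 1 + q / (1 - q ^ 3)"
    by (simp add: split)
qed

lemma has_sum_powi_square:
  fixes q :: real
  assumes "0 \<le> q" "q < 1"
  shows "((\<lambda>k::int. q powi (k * k)) has_sum (2 * (\<Sum>n. q ^ (n * n)) - 1)) UNIV"
  using has_sum_even_int[of "\<lambda>k. q powi (k * k)"] summable_power_square[OF assms] assms(1)
  by (simp add: powi_square_of_nat)

lemma summable_on_powi_square:
  fixes q :: real
  assumes "0 \<le> q" "q < 1"
  shows "(\<lambda>k::int. q powi (k * k)) summable_on UNIV"
  using has_sum_powi_square[OF assms] by (auto simp: summable_on_def)

lemma summable_on_powi_square_mult: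
  fixes q :: real
  assumes "0 \<le> q" "q < 1" and bounded: "\<And>k. \<bar>c k\<bar> \<le> B"
  shows "(\<lambda>k::int. q powi (k * k) * c k) summable_on UNIV"
proof (rule abs_summable_summable)
  have bound: "\<bar>q powi (k * k) * c k\<bar> \<le> q powi (k * k) * B" for k
  proof -
    have nonneg: "0 \<le> q powi (k * k)"
      using assms(1) by simp
    have "\<bar>q powi (k * k) * c k\<bar> = q powi (k * k) * \<bar>c k\<bar>"
      by (simp only: abs_mult abs_of_nonneg[OF nonneg])
    also have "\<dots> \<le> q powi (k * k) * B"
      by (rule mult_left_mono[OF bounded nonneg])
    finally show ?thesis .
  qed
  show "(\<lambda>k::int. norm (q powi (k * k) * c k)) summable_on UNIV"
    by (rule summable_on_comparison_test[OF summable_on_cmult_left[OF summable_on_powi_square[OF assms(1,2)], of B]])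
      (simp_all add: bound)
qed

lemma integrable_count_space_iff_summable_on:
  fixes f :: "'a \<Rightarrow> real"
  shows "integrable (count_space UNIV) f \<longleftrightarrow> f summable_on UNIV"
proof -
  have "f summable_on UNIV \<longleftrightarrow> (\<lambda>x. norm (f x)) summable_on UNIV"
    by (rule summable_on_iff_abs_summable_on_real)
  also have "\<dots> \<longleftrightarrow> integrable (count_space UNIV) f"
    using abs_summable_equivalent[of f UNIV] by (simp only: abs_summable_on_def)
  finally show ?thesis
    by (rule sym)
qed

lemma infsum_eq_integral_count_space:
  fixes f :: "'a \<Rightarrow> real"
  assumes "f summable_on UNIV"
  shows "(\<Sum>\<^sub>\<infinity>x. f x) = (\<integral>x. f x \<partial>count_space UNIV)"
proof -
  have "integrable (count_space UNIV) f"
    using assms by (simp add: integrable_count_space_iff_summable_on)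
  then show ?thesis
    using infsetsum_infsum[of f UNIV] by (simp add: abs_summable_on_def infsetsum_def)
qed

lemma tendsto_infsum_dominated:
  fixes f :: "nat \<Rightarrow> 'a \<Rightarrow> real"
  assumes "g summable_on UNIV" and bound: "\<And>n x. \<bar>f n x\<bar> \<le> g x"
    and lim: "\<And>x. (\<lambda>n. f n x) \<longlonglongrightarrow> h x"
  shows "(\<lambda>n. \<Sum>\<^sub>\<infinity>x. f n x) \<longlonglongrightarrow> (\<Sum>\<^sub>\<infinity>x. h x)"
proof -
  have g: "integrable (count_space UNIV) g"
    using assms(1) by (simp add: integrable_count_space_iff_summable_on)
  have measurable: "h \<in> borel_measurable (count_space UNIV)" "\<And>n. f n \<in> borel_measurable (count_space UNIV)"
    by simp_all
  have AE_lim: "AE x in count_space UNIV. (\<lambda>n. f n x) \<longlonglongrightarrow> h x"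
    and AE_bound: "\<And>n. AE x in count_space UNIV. norm (f n x) \<le> g x"
    using lim bound by (simp_all add: AE_I2)
  note dominated = measurable g AE_lim AE_bound
  have "(\<lambda>n. \<integral>x. f n x \<partial>count_space UNIV) \<longlonglongrightarrow> (\<integral>x. h x \<partial>count_space UNIV)"
    by (rule integral_dominated_convergence[OF dominated])
  moreover have "f n summable_on UNIV" for n
    using integrable_dominated_convergence2[OF dominated] by (simp add: integrable_count_space_iff_summable_on)
  moreover have "h summable_on UNIV"
    using integrable_dominated_convergence[OF dominated] by (simp add: integrable_count_space_iff_summable_on)
  ultimately show ?thesis
    by (simp add: infsum_eq_integral_count_space)
qed

lemma infsum_powi_square_cos_min_at_pi:
  fixes q :: real
  assumes "0 < q" "q < 1"
  shows "(\<Sum>\<^sub>\<infinity>k::int. q powi (k * k) * cos (of_int k * pi)) \<le> (\<Sum>\<^sub>\<infinity>k::int. q powi (k * k) * cos (of_int k * y))"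
proof -
  have p: "0 \<le> q\<^sup>2" "q\<^sup>2 < 1"
    using assms by (auto simp: power_less_one_iff)
  let ?R = "qbinom_central_ratio (q\<^sup>2)"
  have truncated: "(\<Sum>\<^sub>\<infinity>k. q powi (k * k) * ?R n k * cos (of_int k * z)) =
      (\<Sum>k=-int n..int n. q powi (k * k) * ?R n k * cos (of_int k * z))" for n z
    by (subst infsum_cong_neutral[where T = "{-int n..int n}" and g = "\<lambda>k. q powi (k * k) * ?R n k * cos (of_int k * z)"])
       (auto simp: qbinom_central_ratio_eq_0)
  have limit: "(\<lambda>n. \<Sum>\<^sub>\<infinity>k. q powi (k * k) * ?R n k * cos (of_int k * z)) \<longlonglongrightarrow>
      (\<Sum>\<^sub>\<infinity>k. q powi (k * k) * cos (of_int k * z))" for z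
  proof (rule tendsto_infsum_dominated[where g = "\<lambda>k. q powi (k * k)"])
    show "(\<lambda>k::int. q powi (k * k)) summable_on UNIV"
      using assms by (simp add: summable_on_powi_square)
    show "\<bar>q powi (k * k) * ?R n k * cos (of_int k * z)\<bar> \<le> q powi (k * k)" for n k
    proof -
      have "\<bar>?R n k * cos (of_int k * z)\<bar> \<le> 1 * 1"
        unfolding abs_mult using qbinom_central_ratio_nonneg[OF p] qbinom_central_ratio_le_1[OF p]
        by (intro mult_mono) auto
      then show ?thesis
        using assms(1) by (simp add: abs_mult mult.assoc mult_left_le)
    qed
    show "(\<lambda>n. q powi (k * k) * ?R n k * cos (of_int k * z)) \<longlonglongrightarrow> q powi (k * k) * cos (of_int k * z)" for k
      using tendsto_mult[OF tendsto_mult[OF tendsto_const qbinom_central_ratio_tendsto_1[OF p]] tendsto_const]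
      by simp
  qed
  show ?thesis
    by (rule LIMSEQ_le[OF limit limit]) (simp add: truncated central_ratio_cos_sum_min_at_pi[OF assms])
qed

section \<open>Theta on the imaginary axis\<close>

lemma theta_imag_axis:
  "theta (of_real x) (\<i> * of_real t) =
     (\<Sum>\<^sub>\<infinity>m::int. of_real (exp (- pi * t) powi (m * m)) * cis (of_int m * (2 * pi * x)))"
proof -
  have "exp (pi * \<i> * of_int m ^ 2 * (\<i> * of_real t) + 2 * pi * \<i> * of_int m * of_real x) =
        of_real (exp (- pi * t) powi (m * m)) * cis (of_int m * (2 * pi * x))" for m :: int
  proof -
    have "pi * \<i> * of_int m ^ 2 * (\<i> * of_real t) + 2 * pi * \<i> * of_int m * of_real x =
          of_real (of_int (m * m) * (- pi * t)) + \<i> * of_real (of_int m * (2 * pi * x))"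
      by (simp add: algebra_simps power2_eq_square)
    then show ?thesis
      by (simp only: exp_add exp_of_real cis_conv_exp exp_power_int)
  qed
  then show ?thesis
    by (simp add: theta_def)
qed

lemma summable_on_theta_imag_axis:
  assumes "0 < t"
  shows "(\<lambda>m::int. of_real (exp (- pi * t) powi (m * m)) * cis (of_int m * (2 * pi * x))) summable_on UNIV"
proof (rule abs_summable_summable)
  have "(\<lambda>m::int. exp (- pi * t) powi (m * m)) summable_on UNIV"
    using assms by (intro summable_on_powi_square) simp_all
  then show "(\<lambda>m::int. norm (of_real (exp (- pi * t) powi (m * m)) * cis (of_int m * (2 * pi * x)))) summable_on UNIV"
    by (simp add: norm_mult del: of_real_power_int)
qed

lemma Re_theta_imag_axis:
  assumes "0 < t"
  shows "Re (theta (of_real x) (\<i> * of_real t)) =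
           (\<Sum>\<^sub>\<infinity>k::int. exp (- pi * t) powi (k * k) * cos (of_int k * (2 * pi * x)))"
  unfolding theta_imag_axis infsum_Re[OF summable_on_theta_imag_axis[OF assms], symmetric]
  by (simp del: of_real_power_int)

lemma Im_theta_imag_axis:
  assumes "0 < t"
  shows "Im (theta (of_real x) (\<i> * of_real t)) = 0"
proof -
  define g :: "int \<Rightarrow> real" where "g = (\<lambda>m. exp (- pi * t) powi (m * m) * sin (of_int m * (2 * pi * x)))"
  have "Im (theta (of_real x) (\<i> * of_real t)) = infsum g UNIV"
    unfolding theta_imag_axis infsum_Im[OF summable_on_theta_imag_axis[OF assms], symmetric]
    by (simp add: g_def del: of_real_power_int)
  moreover have "infsum g UNIV = - infsum g UNIV"
  proof -
    have "infsum g UNIV = infsum (g \<circ> uminus) UNIV"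
      using infsum_reindex[of uminus UNIV g] by simp
    also have "g \<circ> uminus = (\<lambda>m. - g m)"
      by (auto simp: g_def)
    finally show ?thesis
      by (simp add: infsum_uminus)
  qed
  ultimately show ?thesis
    by simp
qed

lemma Re_theta_imag_axis_min:
  assumes "0 < t"
  shows "Re (theta (1/2) (\<i> * of_real t)) \<le> Re (theta (of_real x) (\<i> * of_real t))"
proof -
  have half: "(1/2 :: complex) = of_real (1/2)"
    by simp
  show ?thesis
    unfolding half Re_theta_imag_axis[OF assms]
    using infsum_powi_square_cos_min_at_pi[of "exp (- pi * t)" "2 * pi * x"] assms by simp
qed

lemma theta_min_eq:
  assumes "0 < t"
  shows "theta_min t = Re (theta (1/2) (\<i> * of_real t))"
  unfolding theta_min_def
proof (rule cInf_eq_minimum)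
  have half: "(1/2 :: complex) = of_real (1/2)"
    by simp
  show "Re (theta (1/2) (\<i> * of_real t)) \<in> range (\<lambda>x. Re (theta (of_real x) (\<i> * of_real t)))"
    unfolding half by (rule rangeI)
qed (use Re_theta_imag_axis_min[OF assms] in auto)

section \<open>Bounds for C(t) and c(t)\<close>

lemma theta_C_eq:
  assumes "0 < t"
  shows "theta_C t = 2 * (\<Sum>n. exp (- pi * t) ^ (n * n)) - 1"
proof -
  have "theta_C t = (\<Sum>\<^sub>\<infinity>k::int. exp (- pi * t) powi (k * k))"
    unfolding theta_C_def using Re_theta_imag_axis[OF assms, of 0] by simp
  also have "\<dots> = 2 * (\<Sum>n. exp (- pi * t) ^ (n * n)) - 1"
    using assms by (intro infsumI has_sum_powi_square) simp_all
  finally show ?thesis .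
qed

lemma theta_min_plus_theta_C_ge_2:
  assumes "0 < t"
  shows "2 \<le> theta_min t + theta_C t"
proof -
  define q where "q = exp (- pi * t)"
  have q: "0 \<le> q" "q < 1"
    using assms by (simp_all add: q_def)
  define f where "f k = q powi (k * k) * (cos (of_int k * pi) + 1)" for k :: int
  have half: "(1/2 :: complex) = of_real (1/2)"
    by simp
  have "theta_min t + theta_C t =
      (\<Sum>\<^sub>\<infinity>k::int. q powi (k * k) * cos (of_int k * pi)) + (\<Sum>\<^sub>\<infinity>k::int. q powi (k * k) * 1)"
    unfolding theta_min_eq[OF assms] theta_C_def half
    using Re_theta_imag_axis[OF assms, of 0] Re_theta_imag_axis[OF assms, of "1/2"]
    by (simp add: q_def)
  also have "\<dots> = infsum f UNIV"
    unfolding f_def distrib_left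
    using q by (intro infsum_add[symmetric] summable_on_powi_square_mult[where B = 1]) simp_all
  finally have "theta_min t + theta_C t = infsum f UNIV" .
  moreover have "f summable_on UNIV"
  proof -
    have "\<bar>cos (of_int k * pi) + 1\<bar> \<le> 2" for k
      using cos_ge_minus_one[of "of_int k * pi"] cos_le_one[of "of_int k * pi"] unfolding abs_le_iff by linarith
    then show ?thesis
      unfolding f_def using q by (intro summable_on_powi_square_mult[where B = 2])
  qed
  moreover have "0 \<le> f k" for k
  proof -
    have "0 \<le> cos (of_int k * pi) + 1"
      using cos_ge_minus_one[of "of_int k * pi"] by linarith
    moreover have "0 \<le> q powi (k * k)"
      using q by simp
    ultimately show ?thesis
      unfolding f_def by (simp only: mult_nonneg_nonneg)
  qed
  ultimately have "sum f {0} \<le> theta_min t + theta_C t"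
    by (metis finite.emptyI finite_insert finite_sum_le_infsum top_greatest)
  then show ?thesis
    by (simp add: f_def)
qed

lemma exp_Taylor_le:
  fixes x :: real
  assumes "0 \<le> x"
  shows "(\<Sum>n<N. x ^ n / fact n) \<le> exp x"
proof -
  have sums: "(\<lambda>n. x ^ n / fact n) sums exp x"
    using exp_converges[of x] by (simp add: divide_inverse mult.commute)
  have "(\<Sum>n<N. x ^ n / fact n) \<le> (\<Sum>n. x ^ n / fact n)"
    using sums assms by (intro sum_le_suminf) (auto simp: sums_iff)
  also have "\<dots> = exp x"
    using sums by (simp add: sums_iff)
  finally show ?thesis .
qed

lemma exp_neg_pi_lt:
  assumes "t > 0.527"
  shows "exp (- pi * t) < 1/5"
proof -
  have "5 < (\<Sum>n<5. (1.655 :: real) ^ n / fact n)"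
    by (simp add: lessThan_nat_numeral fact_numeral power_numeral_reduce)
  also have "\<dots> \<le> exp 1.655"
    by (rule exp_Taylor_le) simp
  finally have exp_1655: "5 < exp (1.655 :: real)" .
  have "3.1415 * 0.527 \<le> pi * t"
    using pi_approx(1) assms by (intro mult_mono) simp_all
  then have "exp 1.655 \<le> exp (pi * t)"
    by simp
  with exp_1655 have "5 < exp (pi * t)"
    by linarith
  then have "inverse (exp (pi * t)) < inverse 5"
    by (rule less_imp_inverse_less) simp
  then show ?thesis
    by (simp add: exp_minus inverse_eq_divide)
qed

lemma theta_C_square_lt_2:
  assumes "t > 0.527"
  shows "theta_C t ^ 2 < 2"
proof -
  define q where "q = exp (- pi * t)"
  have q: "0 < q" "q < 1/5"
    using exp_neg_pi_lt[OF assms] by (simp_all add: q_def)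
  have "q ^ 3 \<le> (1/5) ^ 3"
    using q by (intro power_mono) simp_all
  then have small: "q / (1 - q ^ 3) < 25/124"
    using q by (simp add: divide_simps)
  have C: "theta_C t = 2 * (\<Sum>n. q ^ (n * n)) - 1"
    using assms by (simp add: theta_C_eq q_def)
  have "1 \<le> (\<Sum>n. q ^ (n * n))" "(\<Sum>n. q ^ (n * n)) \<le> 1 + q / (1 - q ^ 3)"
    using suminf_power_square_bounds[of q] q by simp_all
  with C small have "1 \<le> theta_C t" "theta_C t < 87/62"
    by linarith+
  then have "theta_C t ^ 2 < (87/62) ^ 2"
    by (intro power_strict_mono) simp_all
  then show ?thesis
    by (simp add: power2_eq_square)
qed

theorem proposition1p3:
  shows "(\<forall>t::real. t > 0 \<longrightarrow>
            (\<forall>x::real. theta (of_real x) (\<i> * of_real t) \<in> \<real>) \<and>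
            (\<forall>x::real. Re (theta (1/2) (\<i> * of_real t)) \<le> Re (theta (of_real x) (\<i> * of_real t))) \<and>
            theta (1/2) (\<i> * of_real t) = of_real (theta_min t))
       \<and> (\<forall>t::real. t > 0.527 \<longrightarrow> theta_C t * (theta_C t - 1) / theta_min t < 1)"
proof (intro conjI allI impI)
  fix t x :: real
  assume "0 < t"
  show "theta (of_real x) (\<i> * of_real t) \<in> \<real>"
    using Im_theta_imag_axis[OF \<open>0 < t\<close>] by (simp add: complex_is_Real_iff)
  show "Re (theta (1/2) (\<i> * of_real t)) \<le> Re (theta (of_real x) (\<i> * of_real t))"
    by (rule Re_theta_imag_axis_min[OF \<open>0 < t\<close>])
next
  fix t :: real
  assume "0 < t"
  have "Im (theta (1/2) (\<i> * of_real t)) = 0"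
    using Im_theta_imag_axis[OF \<open>0 < t\<close>, of "1/2"] by simp
  then show "theta (1/2) (\<i> * of_real t) = of_real (theta_min t)"
    by (simp add: theta_min_eq[OF \<open>0 < t\<close>] complex_eq_iff)
next
  fix t :: real
  assume "0.527 < t"
  then have square: "theta_C t ^ 2 < 2" and sum: "2 \<le> theta_min t + theta_C t"
    by (simp_all add: theta_C_square_lt_2 theta_min_plus_theta_C_ge_2)
  have "theta_C t ^ 2 < 2 ^ 2"
    using square by simp
  then have "theta_C t < 2"
    by (rule power2_less_imp_less) simp
  with sum have "0 < theta_min t"
    by linarith
  moreover have "theta_C t * (theta_C t - 1) < theta_min t"
    using square sum by (simp add: power2_eq_square algebra_simps)
  ultimately show "theta_C t * (theta_C t - 1) / theta_min t < 1"
    by simp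
qed

end
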